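(* Let $f:\{0,1\}^n\to\{0,1\}^m$ be a Boolean function and let $r$ be the dimension of the affine span of $\operatorname{img}(f)$ in $\mathbb{F}_2^m$. Then $f$ is fully balanced if and only if $b(f)=2^r-1$.
   Context: Strings in $\{0,1\}^k$ are identified with vectors of $\mathbb{F}_2^k$; $\mathbf{a}\cdot\mathbf{b}=\bigoplus_i a_ib_i$ (mod 2). $f$ is $\mathbf{y}$-balanced if $f(\mathbf{x})\cdot\mathbf{y}=0$ for exactly half of the $\mathbf{x}\in\{0,1\}^n$ and $=1$ for the other half, and $\mathbf{y}$-constant if $f(\mathbf{x})\cdot\mathbf{y}$ is the same for all $\mathbf{x}$. $f$ is fully balanced if for every $\mathbf{y}\in\{0,1\}^m$ it is either $\mathbf{y}$-balanced or $\mathbf{y}$-constant. $C(f)=\{\mathbf{y}: f\text{ is }\mathbf{y}\text{-constant}\}$, $B(f)=\{\mathbf{y}: f\text{ is }\mathbf{y}\text{-balanced}\}$, and $b(f)=\#B(f)/\#C(f)$. *)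

theory Defs
  imports "HOL-Analysis.Analysis" "HOL-Library.Z2"
begin

text \<open>Strings in {0,1}^k are vectors in F_2^k, modelled as bit ^ 'k
  (bit is the two-element field from HOL-Library.Z2).\<close>

definition dotF2 :: "bit ^ 'k \<Rightarrow> bit ^ 'k \<Rightarrow> bit" where
  "dotF2 a b = (\<Sum>i\<in>UNIV. a $ i * b $ i)"

definition y_balanced :: "(bit ^ 'n \<Rightarrow> bit ^ 'm) \<Rightarrow> bit ^ 'm \<Rightarrow> bool" where
  "y_balanced f y \<longleftrightarrow>
     2 * card {x. dotF2 (f x) y = 0} = card (UNIV :: (bit ^ 'n) set) \<and>
     2 * card {x. dotF2 (f x) y = 1} = card (UNIV :: (bit ^ 'n) set)"

definition y_constant :: "(bit ^ 'n \<Rightarrow> bit ^ 'm) \<Rightarrow> bit ^ 'm \<Rightarrow> bool" where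
  "y_constant f y \<longleftrightarrow> (\<forall>x x'. dotF2 (f x) y = dotF2 (f x') y)"

definition fully_balanced :: "(bit ^ 'n \<Rightarrow> bit ^ 'm) \<Rightarrow> bool" where
  "fully_balanced f \<longleftrightarrow> (\<forall>y. y_balanced f y \<or> y_constant f y)"

definition Cset :: "(bit ^ 'n \<Rightarrow> bit ^ 'm) \<Rightarrow> (bit ^ 'm) set" where
  "Cset f = {y. y_constant f y}"

definition Bset :: "(bit ^ 'n \<Rightarrow> bit ^ 'm) \<Rightarrow> (bit ^ 'm) set" where
  "Bset f = {y. y_balanced f y}"

definition bratio :: "(bit ^ 'n \<Rightarrow> bit ^ 'm) \<Rightarrow> real" where
  "bratio f = real (card (Bset f)) / real (card (Cset f))"

text \<open>Dimension of the affine span of a nonempty set S over F_2: the dimension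
  of its direction space, i.e. the linear span of the S - s0 for a point s0 in S.\<close>
definition aff_dim_F2 :: "(bit ^ 'm) set \<Rightarrow> nat" where
  "aff_dim_F2 S = (let s0 = (SOME s. s \<in> S) in vec.dim ((\<lambda>s. s - s0) ` S))"

end

theory Submission
  imports Defs
begin

text \<open>Write \<open>D = {s - s\<^sub>0 | s \<in> img f}\<close> for the direction space of the affine span of
  \<open>img f\<close>, of dimension \<open>r\<close>. The map \<open>y \<mapsto> \<langle>f x, y\<rangle>\<close> is constant in \<open>x\<close> exactly when \<open>y\<close>
  annihilates \<open>D\<close>, so \<open>C(f)\<close> is the annihilator of a basis of \<open>D\<close>; its cosets are the fibres of
  the surjection \<open>y \<mapsto> (\<langle>b, y\<rangle>)\<^sub>b\<close> onto \<open>{0,1}\<^sup>r\<close>, hence \<open>2\<^sup>m = #C(f) \<cdot> 2\<^sup>r\<close>. Since no \<open>y\<close> is both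
  balanced and constant, \<open>f\<close> is fully balanced iff \<open>#B(f) + #C(f) = 2\<^sup>m = #C(f) \<cdot> 2\<^sup>r\<close>, i.e.
  iff \<open>b(f) = 2\<^sup>r - 1\<close>.\<close>

lemma UNIV_bit: "(UNIV :: bit set) = {0, 1}"
  by (auto intro: bit.exhaust)

instance bit :: finite
  by standard (simp only: UNIV_bit finite.emptyI finite_insert)

lemma card_UNIV_bit: "CARD(bit) = 2"
  by (simp only: UNIV_bit) simp

lemma dotF2_add_left: "dotF2 (a + b) y = dotF2 a y + dotF2 b y"
  unfolding dotF2_def by (simp only: vector_add_component distrib_right sum.distrib)

lemma dotF2_diff_left: "dotF2 (a - b) y = dotF2 a y - dotF2 b y"
  unfolding dotF2_def by (simp only: vector_minus_component left_diff_distrib sum_subtractf)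

lemma dotF2_scale_left: "dotF2 (c *s a) y = c * dotF2 a y"
  unfolding dotF2_def by (simp only: vector_smult_component sum_distrib_left mult.assoc)

lemma dotF2_diff_right: "dotF2 a (y - z) = dotF2 a y - dotF2 a z"
  unfolding dotF2_def by (simp only: vector_minus_component right_diff_distrib sum_subtractf)

lemma dotF2_axis_left: "dotF2 (axis i 1) y = y $ i"
proof -
  have "dotF2 (axis i 1) y = (\<Sum>j\<in>UNIV. if j = i then y $ i else 0)"
    unfolding dotF2_def by (intro sum.cong) (auto simp: axis_def)
  then show ?thesis by simp
qed

lemma vector_space_pair_vec_bit:
  "vector_space_pair ((*s) :: bit \<Rightarrow> bit ^ 'm \<Rightarrow> bit ^ 'm) ((*) :: bit \<Rightarrow> bit \<Rightarrow> bit)"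
  unfolding vector_space_pair_def
  by (simp add: vec.vector_space_axioms vector_space_over_itself.vector_space_axioms
      del: mult_bit_eq_and)

lemma linear_dotF2_left:
  "Vector_Spaces.linear ((*s) :: bit \<Rightarrow> bit ^ 'm \<Rightarrow> bit ^ 'm) (*) (\<lambda>v. dotF2 v y)"
  unfolding Vector_Spaces.linear_iff
  by (simp add: dotF2_add_left dotF2_scale_left vec.vector_space_axioms
      vector_space_over_itself.vector_space_axioms del: mult_bit_eq_and)

lemma linear_functional_eq_dotF2:
  assumes "Vector_Spaces.linear ((*s) :: bit \<Rightarrow> bit ^ 'm \<Rightarrow> bit ^ 'm) (*) \<phi>"
  shows "\<exists>y. \<forall>v. \<phi> v = dotF2 v y"
proof (intro exI allI)
  fix v :: "bit ^ 'm"
  show "\<phi> v = dotF2 v (\<chi> i. \<phi> (axis i 1))"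
    by (rule vector_space_pair.linear_eq_on[OF vector_space_pair_vec_bit assms linear_dotF2_left,
          of v cart_basis], simp)
      (auto simp: cart_basis_def dotF2_axis_left)
qed

lemma independent_dotF2_interpolation:
  assumes "vec.independent (B :: (bit ^ 'm) set)"
  shows "\<exists>y. \<forall>b\<in>B. dotF2 b y = g b"
proof -
  interpret vector_space_pair "(*s) :: bit \<Rightarrow> bit ^ 'm \<Rightarrow> bit ^ 'm" "(*) :: bit \<Rightarrow> bit \<Rightarrow> bit"
    by (rule vector_space_pair_vec_bit)
  obtain y where "\<forall>v. construct B g v = dotF2 v y"
    using linear_functional_eq_dotF2[OF linear_construct[OF assms]] by blast
  then show ?thesis
    using construct_basis[OF assms] by metis
qed

lemma dotF2_span_eq_0:
  assumes "\<forall>b\<in>B. dotF2 b y = 0" and "v \<in> vec.span B"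
  shows "dotF2 v y = 0"
proof -
  have "vec.subspace {v. dotF2 v y = 0}"
    by (rule vector_space_pair.linear_subspace_kernel[OF vector_space_pair_vec_bit linear_dotF2_left])
  then have "vec.span B \<subseteq> {v. dotF2 v y = 0}"
    using assms(1) by (intro vec.span_minimal) auto
  then show ?thesis using assms(2) by blast
qed

lemma card_UNIV_eq_card_mult_card_range:
  fixes L :: "'a :: {ab_group_add, finite} \<Rightarrow> 'b"
  assumes fibres: "\<And>x y. L x = L y \<longleftrightarrow> x - y \<in> K"
  shows "CARD('a) = card K * card (range L)"
proof -
  have "card (L -` {L y}) = card K" for y
  proof -
    have "L -` {L y} = (\<lambda>k. k + y) ` K"
      using fibres by (auto simp: image_iff) (metis diff_add_cancel)
    moreover have "inj_on (\<lambda>k. k + y) K"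
      by (auto simp: inj_on_def)
    ultimately show ?thesis by (simp add: card_image)
  qed
  then have fibre_card: "card (L -` {u}) = card K" if "u \<in> range L" for u
    using that by blast
  have "CARD('a) = card (\<Union>u\<in>range L. L -` {u})"
    by (auto intro!: arg_cong[where f = card])
  also have "\<dots> = (\<Sum>u\<in>range L. card (L -` {u}))"
    by (rule card_UN_disjoint) auto
  also have "\<dots> = card K * card (range L)"
    using fibre_card by simp
  finally show ?thesis .
qed

lemma card_UNIV_eq_card_annihilator_mult:
  assumes ind: "vec.independent (B :: (bit ^ 'm) set)"
  shows "CARD(bit ^ 'm) = card {y. \<forall>b\<in>B. dotF2 b y = 0} * 2 ^ card B"
proof -
  define L where "L y = restrict (\<lambda>b. dotF2 b y) B" for y :: "bit ^ 'm"
  have "L x = L y \<longleftrightarrow> x - y \<in> {y. \<forall>b\<in>B. dotF2 b y = 0}" for x y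
    by (auto simp: L_def restrict_def fun_eq_iff dotF2_diff_right)
  then have "CARD(bit ^ 'm) = card {y. \<forall>b\<in>B. dotF2 b y = 0} * card (range L)"
    by (rule card_UNIV_eq_card_mult_card_range)
  moreover have "range L = PiE B (\<lambda>_. UNIV)"
  proof
    show "PiE B (\<lambda>_. UNIV) \<subseteq> range L"
    proof
      fix g assume g: "g \<in> PiE B (\<lambda>_. (UNIV :: bit set))"
      obtain y where "\<forall>b\<in>B. dotF2 b y = g b"
        using independent_dotF2_interpolation[OF ind] by blast
      then have "L y = g"
        using g by (auto simp: L_def PiE_def extensional_def fun_eq_iff)
      then show "g \<in> range L" by blast
    qed
  qed (auto simp: L_def)
  moreover have "finite B"
    using vec.finiteI_independent[OF ind] .
  ultimately show ?thesis
    by (simp add: card_PiE card_UNIV_bit)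
qed

lemma y_constant_iff_dotF2_differences:
  assumes "s\<^sub>0 \<in> range f"
  shows "y_constant f y \<longleftrightarrow> (\<forall>s\<in>range f. dotF2 (s - s\<^sub>0) y = 0)"
proof -
  obtain x\<^sub>0 where "s\<^sub>0 = f x\<^sub>0"
    using assms by blast
  then show ?thesis
    unfolding y_constant_def dotF2_diff_left right_minus_eq by (metis (mono_tags) rangeI rangeE)
qed

lemma card_UNIV_eq_card_Cset_mult:
  fixes f :: "bit ^ 'n \<Rightarrow> bit ^ 'm"
  shows "CARD(bit ^ 'm) = card (Cset f) * 2 ^ aff_dim_F2 (range f)"
proof -
  define s\<^sub>0 where "s\<^sub>0 = (SOME s. s \<in> range f)"
  have s\<^sub>0: "s\<^sub>0 \<in> range f"
    unfolding s\<^sub>0_def by (rule someI) blast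
  define D where "D = (\<lambda>s. s - s\<^sub>0) ` range f"
  obtain B where BD: "B \<subseteq> D" and ind: "vec.independent B" and DB: "D \<subseteq> vec.span B"
    by (rule vec.maximal_independent_subset)
  have "aff_dim_F2 (range f) = card B"
    unfolding aff_dim_F2_def Let_def s\<^sub>0_def[symmetric] D_def[symmetric]
    using vec.basis_card_eq_dim[OF BD DB ind] by simp
  moreover have "Cset f = {y. \<forall>b\<in>B. dotF2 b y = 0}"
  proof -
    have "(\<forall>d\<in>D. dotF2 d y = 0) \<longleftrightarrow> (\<forall>b\<in>B. dotF2 b y = 0)" for y
      using BD DB dotF2_span_eq_0[of B y] by blast
    then show ?thesis
      by (simp add: Cset_def y_constant_iff_dotF2_differences[OF s\<^sub>0] D_def)
  qed
  ultimately show ?thesis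
    using card_UNIV_eq_card_annihilator_mult[OF ind] by simp
qed

lemma Bset_Cset_disjoint:
  fixes f :: "bit ^ 'n \<Rightarrow> bit ^ 'm"
  shows "Bset f \<inter> Cset f = {}"
proof -
  have "\<not> y_balanced f y" if "y_constant f y" for y
  proof -
    have "{x. dotF2 (f x) y = c} = (if dotF2 (f undefined) y = c then UNIV else {})" for c
      using that unfolding y_constant_def by auto
    then show ?thesis
      unfolding y_balanced_def by simp
  qed
  then show ?thesis
    unfolding Bset_def Cset_def by blast
qed

lemma fully_balanced_iff_card:
  fixes f :: "bit ^ 'n \<Rightarrow> bit ^ 'm"
  shows "fully_balanced f \<longleftrightarrow> card (Bset f) + card (Cset f) = CARD(bit ^ 'm)"
proof -
  have "fully_balanced f \<longleftrightarrow> Bset f \<union> Cset f = UNIV"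
    by (auto simp: fully_balanced_def Bset_def Cset_def)
  also have "\<dots> \<longleftrightarrow> card (Bset f \<union> Cset f) = CARD(bit ^ 'm)"
    using card_subset_eq[OF finite subset_UNIV, of "Bset f \<union> Cset f"] by auto
  also have "card (Bset f \<union> Cset f) = card (Bset f) + card (Cset f)"
    by (rule card_Un_disjoint[OF finite finite Bset_Cset_disjoint])
  finally show ?thesis .
qed

theorem mainTheorem6:
  fixes f :: "bit ^ 'n \<Rightarrow> bit ^ 'm"
  shows "fully_balanced f \<longleftrightarrow> bratio f = 2 ^ aff_dim_F2 (range f) - 1"
proof -
  let ?B = "real (card (Bset f))" and ?C = "real (card (Cset f))"
  define r where "r = aff_dim_F2 (range f)"
  have count: "CARD(bit ^ 'm) = card (Cset f) * 2 ^ r"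
    unfolding r_def by (rule card_UNIV_eq_card_Cset_mult)
  then have "?C \<noteq> 0"
    using zero_less_card_finite[where 'a = "bit ^ 'm"] by (auto simp del: card_0_eq)
  have "fully_balanced f \<longleftrightarrow> ?B + ?C = ?C * 2 ^ r"
    unfolding fully_balanced_iff_card count
    by (simp only: of_nat_eq_iff[symmetric, where 'a = real] of_nat_add of_nat_mult
        of_nat_power of_nat_numeral)
  also have "\<dots> \<longleftrightarrow> ?B / ?C = 2 ^ r - 1"
    using \<open>?C \<noteq> 0\<close> by (auto simp: field_simps)
  finally show ?thesis
    unfolding bratio_def r_def .
qed

end
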